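(* In the setting of the context (battery capacity $c$, nonnegative i.i.d. energy arrivals distributed as $X$, increasing concave reward $r$ with continuous derivative $r'$, and $r'(\underline{x})>r'(\overline{x})$), let $$c^*\triangleq\max\{c\ge 0:\ r'(c)\ge \mathbb{E}[r'(X)\mathbf{1}\{X<c\}]\},$$ which is the largest battery capacity for which the greedy policy is throughput-optimal. Then $$c^*\ge \underline{c}\triangleq\sup\{c\in(\underline{x},\overline{x}):\ r'(c)\ge \rho(c)\,\overline{r'}_{[\underline{x},c]}(\underline{\xi})\},\qquad \underline{\xi}\triangleq\max\left\{\frac{\mu-(1-\rho(c))\overline{x}}{\rho(c)},\,\underline{x}\right\}.$$ In particular, for $r(x)=\frac12\log(1+x)$, $$\underline{c}=\sup\{c\in(\underline{x},\overline{x}):\ c\le \overline{\zeta}(c)\},\qquad \overline{\zeta}(c)\triangleq\frac{(1-\rho(c))(1+\underline{x})+\rho(c)\underline{\xi}}{\rho(c)}.$$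
   Context: Setting: $X_1,X_2,\dots$ are i.i.d. copies of a nonnegative random variable $X$; a policy chooses $G_t=f_t(X_1,\dots,X_t)$; battery $B_t=\min\{B_{t-1}-G_{t-1}+X_t,c\}$ with $B_0=G_0=0$; admissibility means $G_t\le B_t$; throughput is $\liminf_n\frac1n\mathbb{E}[\sum_{t\le n}r(G_t)]$; the greedy policy is $G_t=B_t$. The reward $r:[0,\infty)\to[0,\infty)$ is monotonically increasing and concave with continuous derivative $r'$. Notation: $\rho(x)\triangleq\mathbb{P}(X<x)$, $\underline{x}\triangleq\max\{x\ge0:\rho(x)=0\}$, $\overline{x}\triangleq\inf\{x\ge0:\rho(x)=1\}$ (possibly $+\infty$; then $(1-\rho(c))\overline{x}=+\infty$ for $c<\overline{x}$ so $\underline{\xi}=\underline{x}$), $r'(\infty)\triangleq\lim_{x\to\infty}r'(x)$, $\mu\triangleq\mathbb{E}[X]$. For $c>\underline{x}$, $\overline{r'}_{[\underline{x},c]}$ denotes the upper concave envelope (smallest concave majorant) of $r'$ restricted to $[\underline{x},c]$. Logarithms are natural. *)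

theory Defs
  imports "HOL-Probability.Probability"
begin

definition rho :: "'a measure \<Rightarrow> ('a \<Rightarrow> real) \<Rightarrow> real \<Rightarrow> real" where
  "rho M X x = measure M {\<omega> \<in> space M. X \<omega> < x}"

definition xlow :: "'a measure \<Rightarrow> ('a \<Rightarrow> real) \<Rightarrow> real" where
  "xlow M X = (GREATEST x. x \<ge> 0 \<and> rho M X x = 0)"

text \<open>Upper end of the support, possibly infinite (Inf of the empty set is infinity).\<close>
definition xup :: "'a measure \<Rightarrow> ('a \<Rightarrow> real) \<Rightarrow> ereal" where
  "xup M X = Inf (ereal ` {x. x \<ge> 0 \<and> rho M X x = 1})"

definition mu :: "'a measure \<Rightarrow> ('a \<Rightarrow> real) \<Rightarrow> real" where
  "mu M X = integral\<^sup>L M X"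

definition deriv_at_xup :: "'a measure \<Rightarrow> ('a \<Rightarrow> real) \<Rightarrow> (real \<Rightarrow> real) \<Rightarrow> real" where
  "deriv_at_xup M X r' =
     (if xup M X = \<infinity> then Lim at_top r' else r' (real_of_ereal (xup M X)))"

text \<open>xi(c); if xup is infinite then (1 - rho c) * xup = infinity (c < xup), so xi = xlow.\<close>
definition xi :: "'a measure \<Rightarrow> ('a \<Rightarrow> real) \<Rightarrow> real \<Rightarrow> real" where
  "xi M X c =
     (if xup M X = \<infinity> then xlow M X
      else max ((mu M X - (1 - rho M X c) * real_of_ereal (xup M X)) / rho M X c) (xlow M X))"

definition concave_env :: "(real \<Rightarrow> real) \<Rightarrow> real \<Rightarrow> real \<Rightarrow> real \<Rightarrow> real" where
  "concave_env f a b x =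
     Inf {g x | g. concave_on {a..b} g \<and> (\<forall>y\<in>{a..b}. f y \<le> g y)}"

definition cstar :: "'a measure \<Rightarrow> ('a \<Rightarrow> real) \<Rightarrow> (real \<Rightarrow> real) \<Rightarrow> real" where
  "cstar M X r' = (GREATEST c. c \<ge> 0 \<and>
      r' c \<ge> integral\<^sup>L M (\<lambda>\<omega>. r' (X \<omega>) * indicator {..<c} (X \<omega>)))"

definition clow :: "'a measure \<Rightarrow> ('a \<Rightarrow> real) \<Rightarrow> (real \<Rightarrow> real) \<Rightarrow> real" where
  "clow M X r' = Sup {c. xlow M X < c \<and> ereal c < xup M X \<and>
      r' c \<ge> rho M X c * concave_env r' (xlow M X) c (xi M X c)}"

definition zeta :: "'a measure \<Rightarrow> ('a \<Rightarrow> real) \<Rightarrow> real \<Rightarrow> real" where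
  "zeta M X c = ((1 - rho M X c) * (1 + xlow M X) + rho M X c * xi M X c) / rho M X c"

end

theory Submission
  imports Defs
begin

(*
  Write E(c) for the partial expectation E[r'(X) 1{X < c}], so that c* is the largest c >= 0
  with E(c) <= r'(c).  E is left-continuous, r' is continuous, and when
  r'(xlow) > r'(xup) one has E(c) > r'(c) for all large c; hence {c >= 0. E(c) <= r'(c)}
  contains its supremum, and it suffices to show E(c) <= r'(c) for every c in the set
  defining c_low.

  For xlow < c, let g be a concave majorant of r' on [xlow, c] and G = min(g, r'(xlow)).  As r'
  is antitone, G is again a concave majorant, and being maximal at xlow it is nonincreasing.
  Jensen's inequality for the law of X conditioned on X < c gives E(c) <= rho(c) G(m), where m
  is the conditional mean.  Since X >= xlow, and X <= xup on {X >= c}, we have xi(c) <= m,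
  hence E(c) <= rho(c) G(xi(c)) <= rho(c) g(xi(c)).  Taking the infimum over g,
  E(c) <= rho(c) env(xi(c)), which is at most r'(c) on the set defining c_low.  That set is
  nonempty because rho < 1 below xup and r' is continuous at xlow.

  For r(x) = ln(1 + x)/2 the derivative 1/(2(1 + x)) is convex, so its concave envelope on
  [xlow, c] is the chord, and the defining inequality of c_low rearranges to c <= zeta(c).
*)

section \<open>Concave functions and concave envelopes\<close>

lemma concave_on_min_const:
  assumes "concave_on S g"
  shows "concave_on S (\<lambda>x. min (g x) k)"
  unfolding concave_on_iff
proof (intro conjI ballI allI impI)
  show "convex S" using assms by (rule concave_on_imp_convex)
  fix x y and u v :: real assume uv: "x \<in> S" "y \<in> S" "0 \<le> u" "0 \<le> v" "u + v = 1"
  have "u * min (g x) k + v * min (g y) k \<le> u * g x + v * g y"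
    using uv by (intro add_mono mult_left_mono) auto
  also have "\<dots> \<le> g (u *\<^sub>R x + v *\<^sub>R y)"
    using assms uv unfolding concave_on_iff by blast
  finally have "u * min (g x) k + v * min (g y) k \<le> g (u *\<^sub>R x + v *\<^sub>R y)" .
  moreover have "u * min (g x) k + v * min (g y) k \<le> u * k + v * k"
    using uv by (intro add_mono mult_left_mono) auto
  moreover have "u * k + v * k = k"
    using uv by (simp flip: distrib_right)
  ultimately show "u * min (g x) k + v * min (g y) k \<le> min (g (u *\<^sub>R x + v *\<^sub>R y)) k"
    by (intro min.boundedI) linarith+
qed

lemma concave_on_affine: "convex S \<Longrightarrow> concave_on S (\<lambda>t. \<alpha> + \<beta> * t :: real)"
  unfolding concave_on_iff by (auto simp: algebra_simps simp flip: distrib_right)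

lemma concave_on_imp_below_tangent:
  assumes "concave_on A f" "connected A" "c \<in> interior A" "x \<in> A"
    and "(f has_real_derivative f') (at c within A)"
  shows "f x - f c \<le> f' * (x - c)"
proof -
  have "(- f x) - (- f c) \<ge> (- f') * (x - c)"
    using assms by (intro convex_on_imp_above_tangent[of A "\<lambda>x. - f x"])
      (auto simp: concave_on_def intro!: derivative_eq_intros)
  then show ?thesis by simp
qed

lemma concave_on_Icc_antimono:
  fixes G :: "real \<Rightarrow> real"
  assumes "concave_on {a..b} G" "\<And>y. y \<in> {a..b} \<Longrightarrow> G y \<le> G a"
    and "a \<le> x" "x \<le> y" "y \<le> b"
  shows "G y \<le> G x"
proof (cases "x = y")
  case False
  define t where "t = (x - a) / (y - a)"
  have "a < y"
    using assms(3,4) False by simp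
  have t: "0 \<le> t" "t \<le> 1"
    using \<open>a < y\<close> assms(3,4) by (auto simp: t_def divide_le_eq)
  have "t * (y - a) = x - a"
    using \<open>a < y\<close> by (simp add: t_def)
  moreover have "(1 - t) * a + t * y = a + t * (y - a)"
    by (simp add: algebra_simps)
  ultimately have "(1 - t) *\<^sub>R a + t *\<^sub>R y = x"
    by simp
  have "(1 - t) * G a + t * G y \<le> G x"
    using concave_onD[OF assms(1) t, of a y] \<open>(1 - t) *\<^sub>R a + t *\<^sub>R y = x\<close> assms(3-5) by simp
  moreover have "(1 - t) * G y \<le> (1 - t) * G a"
    using assms t by (intro mult_left_mono) auto
  ultimately show ?thesis
    by (simp add: algebra_simps)
qed simp

lemma chord_eq_convex_combination:
  fixes a b x :: real
  shows "f a + (f b - f a) / (b - a) * (x - a) = (1 - (x - a) / (b - a)) * f a + (x - a) / (b - a) * f b"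
  by (simp add: algebra_simps diff_divide_distrib)

lemma concave_env_le:
  assumes "concave_on {a..b} g" "\<And>y. y \<in> {a..b} \<Longrightarrow> f y \<le> g y" "x \<in> {a..b}"
  shows "concave_env f a b x \<le> g x"
  unfolding concave_env_def
  by (rule cInf_lower) (use assms in \<open>auto intro!: bdd_belowI[of _ "f x"]\<close>)

lemma concave_env_greatest:
  assumes "concave_on {a..b} h" "\<And>y. y \<in> {a..b} \<Longrightarrow> f y \<le> h y"
    and "\<And>g. concave_on {a..b} g \<Longrightarrow> (\<And>y. y \<in> {a..b} \<Longrightarrow> f y \<le> g y)
            \<Longrightarrow> z \<le> g x"
  shows "z \<le> concave_env f a b x"
  unfolding concave_env_def
  by (rule cInf_greatest) (use assms in blast)+

lemma concave_env_cong:
  assumes "\<And>y. y \<in> {a..b} \<Longrightarrow> f y = g y"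
  shows "concave_env f a b x = concave_env g a b x"
  unfolding concave_env_def using assms by simp

lemma concave_env_convex:
  assumes "convex_on {a..b} f" "a < b" "x \<in> {a..b}"
  shows "concave_env f a b x = f a + (f b - f a) / (b - a) * (x - a)"
proof -
  define \<beta> where "\<beta> = (f b - f a) / (b - a)"
  define h where "h y = (f a - \<beta> * a) + \<beta> * y" for y
  have h_chord: "h y = f a + (f b - f a) / (b - a) * (y - a)" for y
    unfolding h_def \<beta>_def[symmetric] by (simp add: algebra_simps)
  have h_concave: "concave_on {a..b} h"
    unfolding h_def by (rule concave_on_affine) simp
  have f_le_h: "f y \<le> h y" if "y \<in> {a..b}" for y
    using convex_onD_Icc'[OF assms(1) that] by (simp add: h_chord algebra_simps)
  have "concave_env f a b x \<le> h x"
    using concave_env_le[OF h_concave f_le_h assms(3)] .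
  moreover have "h x \<le> concave_env f a b x"
  proof (rule concave_env_greatest[OF h_concave f_le_h])
    fix g assume g: "concave_on {a..b} g" "\<And>y. y \<in> {a..b} \<Longrightarrow> f y \<le> g y"
    have "(1 - (x - a) / (b - a)) * f a + (x - a) / (b - a) * f b
          \<le> (1 - (x - a) / (b - a)) * g a + (x - a) / (b - a) * g b"
      using assms g(2) by (intro add_mono mult_left_mono) auto
    then have "h x \<le> g a + (g b - g a) / (b - a) * (x - a)"
      by (simp only: h_chord chord_eq_convex_combination)
    also have "\<dots> \<le> g x"
      using concave_onD_Icc'[OF g(1) assms(3)] by (simp add: algebra_simps)
    finally show "h x \<le> g x" .
  qed
  ultimately show ?thesis
    by (simp add: h_chord)
qed

lemma convex_on_half_inverse_succ: "convex_on {0..} (\<lambda>x::real. 1 / (2 * (1 + x)))"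
proof (rule convex_on_realI[where f'="\<lambda>x. - 1 / (2 * (1 + x)\<^sup>2)"])
  show "((\<lambda>x. 1 / (2 * (1 + x))) has_real_derivative - 1 / (2 * (1 + x)\<^sup>2)) (at x)"
    if "x \<in> {0..}" for x :: real
    using that
    by (auto intro!: derivative_eq_intros simp: divide_simps power2_eq_square) (simp add: algebra_simps)
  show "- 1 / (2 * (1 + x)\<^sup>2) \<le> - 1 / (2 * (1 + y)\<^sup>2)"
    if "x \<in> {0..}" "y \<in> {0..}" "x \<le> y" for x y :: real
    using that by (auto intro!: divide_left_mono power_mono mult_pos_pos)
qed simp

lemma log_reward_threshold_iff:
  fixes a c \<rho> \<xi> :: real
  assumes "0 \<le> a" "a < c" "0 < \<rho>"
  defines "f \<equiv> \<lambda>x::real. 1 / (2 * (1 + x))"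
  shows "\<rho> * (f a + (f c - f a) / (c - a) * (\<xi> - a)) \<le> f c
           \<longleftrightarrow> c \<le> ((1 - \<rho>) * (1 + a) + \<rho> * \<xi>) / \<rho>"
proof -
  have "f c - f a = (a - c) / (2 * (1 + a) * (1 + c))"
    using assms(1,2) unfolding f_def by (simp add: divide_simps) (simp add: algebra_simps)
  then have chord: "f a + (f c - f a) / (c - a) * (\<xi> - a) = (1 + a + c - \<xi>) / (2 * (1 + a) * (1 + c))"
    using assms(1,2) unfolding f_def by (simp add: divide_simps) (simp add: algebra_simps)
  have fc: "f c = (1 + a) / (2 * (1 + a) * (1 + c))"
    using assms(1,2) unfolding f_def by (simp add: divide_simps) (simp add: algebra_simps)
  have "0 < 2 * (1 + a) * (1 + c)"
    using assms(1,2) by simp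
  then have "\<rho> * (f a + (f c - f a) / (c - a) * (\<xi> - a)) \<le> f c
               \<longleftrightarrow> \<rho> * (1 + a + c - \<xi>) \<le> 1 + a"
    unfolding chord unfolding fc by (simp add: divide_le_cancel)
  also have "\<dots> \<longleftrightarrow> c \<le> ((1 - \<rho>) * (1 + a) + \<rho> * \<xi>) / \<rho>"
    using assms(3) by (simp add: field_simps)
  finally show ?thesis .
qed

section \<open>Concave rewards\<close>

locale concave_reward =
  fixes r r' :: "real \<Rightarrow> real"
  assumes r_mono: "mono_on {0..} r"
    and r_concave: "concave_on {0..} r"
    and r_has_deriv: "\<And>x. 0 \<le> x \<Longrightarrow> (r has_real_derivative r' x) (at x within {0..})"
    and deriv_cont: "continuous_on {0..} r'"
begin

lemma deriv_tendsto_at_right: "0 \<le> x \<Longrightarrow> (r' \<longlongrightarrow> r' x) (at_right x)"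
  using deriv_cont by (auto simp: continuous_on_def intro: tendsto_within_subset)

lemma below_tangent: "0 < c \<Longrightarrow> 0 \<le> x \<Longrightarrow> r x - r c \<le> r' c * (x - c)"
  by (rule concave_on_imp_below_tangent[OF r_concave]) (auto intro: r_has_deriv)

lemma deriv_antimono:
  assumes "0 \<le> x" "x \<le> y"
  shows "r' y \<le> r' x"
proof (cases "x = y")
  case False
  have interior: "r' y \<le> r' t" if "0 < t" "t < y" for t
  proof -
    have "r' y * (y - t) \<le> r y - r t" "r y - r t \<le> r' t * (y - t)"
      using below_tangent[of t y] below_tangent[of y t] that by (simp_all add: algebra_simps)
    then have "r' y * (y - t) \<le> r' t * (y - t)"
      by linarith
    then show ?thesis
      using that by (simp add: mult_le_cancel_right)
  qed
  from False assms have "x < y"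
    by simp
  from eventually_at_right_real[OF this]
  have "eventually (\<lambda>t. r' y \<le> r' t) (at_right x)"
    by eventually_elim (use interior assms(1) in auto)
  then show ?thesis
    using deriv_tendsto_at_right[OF assms(1)] by (auto intro: tendsto_lowerbound)
qed simp

lemma deriv_nonneg:
  assumes "0 \<le> x"
  shows "0 \<le> r' x"
proof -
  have "r (x + 1) \<le> r (x + 2)"
    using r_mono assms by (auto intro: mono_onD)
  then have "0 \<le> r' (x + 1)"
    using below_tangent[of "x + 1" "x + 2"] assms by simp
  also have "\<dots> \<le> r' x"
    using deriv_antimono assms by simp
  finally show ?thesis .
qed

lemma deriv_tendsto_Inf: "(r' \<longlongrightarrow> Inf (r' ` {0..})) at_top"
proof -
  have bdd: "bdd_below (r' ` {0..})"
    using deriv_nonneg by (intro bdd_belowI[where m=0]) auto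
  show ?thesis
  proof (rule order_tendstoI)
    fix y assume "y < Inf (r' ` {0..})"
    then show "eventually (\<lambda>x. y < r' x) at_top"
      unfolding eventually_at_top_linorder
      by (intro exI[of _ 0]) (auto intro: less_le_trans cInf_lower[OF _ bdd])
  next
    fix y assume "Inf (r' ` {0..}) < y"
    then obtain x0 where "0 \<le> x0" "r' x0 < y"
      using cInf_less_iff[OF _ bdd] by auto
    then show "eventually (\<lambda>x. r' x < y) at_top"
      unfolding eventually_at_top_linorder
      by (intro exI[of _ x0]) (auto intro: le_less_trans deriv_antimono)
  qed
qed

lemma deriv_log_reward:
  assumes "\<forall>x\<ge>0. r x = ln (1 + x) / 2" "0 \<le> x"
  shows "r' x = 1 / (2 * (1 + x))"
proof -
  have "((\<lambda>x. ln (1 + x) / 2) has_real_derivative 1 / (2 * (1 + x))) (at x within {0..})"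
    using assms(2) by (auto intro!: derivative_eq_intros simp: divide_simps)
  then have "(r has_real_derivative 1 / (2 * (1 + x))) (at x within {0..})"
    by (rule has_field_derivative_transform_within[where d=1]) (use assms in auto)
  moreover have "at x within {0..} \<noteq> bot"
  proof -
    have "at_right x \<le> at x within {0..}"
      using assms(2) by (intro at_le) auto
    then show ?thesis
      using trivial_limit_at_right_real[of x] by (auto simp: bot_unique)
  qed
  ultimately show ?thesis
    using has_field_derivative_unique r_has_deriv[OF assms(2)] by blast
qed

end

section \<open>Partial expectations of a nonnegative random variable\<close>

lemma AE_ge_if_AE_ge_below:
  fixes f :: "'a \<Rightarrow> real"
  assumes "\<And>y. y < t \<Longrightarrow> AE x in M. y \<le> f x"
  shows "AE x in M. t \<le> f x"
proof -
  have "AE x in M. \<forall>q\<in>\<rat> \<inter> {..<t}. q \<le> f x"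
    using assms by (subst AE_ball_countable) (auto intro: countable_Int1 countable_rat)
  then show ?thesis
  proof eventually_elim
    fix x assume below: "\<forall>q\<in>\<rat> \<inter> {..<t}. q \<le> f x"
    show "t \<le> f x"
    proof (rule ccontr)
      assume "\<not> t \<le> f x"
      then obtain q where "q \<in> \<rat>" "f x < q" "q < t"
        using Rats_dense_in_real[of "f x" t] by auto
      with below have "q \<le> f x" by blast
      with \<open>f x < q\<close> show False by simp
    qed
  qed
qed

lemma AE_le_if_AE_le_above:
  fixes f :: "'a \<Rightarrow> real"
  assumes "\<And>y. u < y \<Longrightarrow> AE x in M. f x \<le> y"
  shows "AE x in M. f x \<le> u"
proof -
  have "AE x in M. - u \<le> - f x"
  proof (rule AE_ge_if_AE_ge_below)
    fix y assume "y < - u"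
    then have "AE x in M. f x \<le> - y"
      by (intro assms) simp
    then show "AE x in M. y \<le> - f x"
      by eventually_elim simp
  qed
  then show ?thesis
    by eventually_elim simp
qed

definition partial_expectation ::
    "'a measure \<Rightarrow> ('a \<Rightarrow> real) \<Rightarrow> (real \<Rightarrow> real) \<Rightarrow> real \<Rightarrow> real" where
  "partial_expectation M X f c = (\<integral>\<omega>. f (X \<omega>) * indicator {..<c} (X \<omega>) \<partial>M)"

locale nonneg_random_variable = prob_space M for M :: "'a measure" +
  fixes X :: "'a \<Rightarrow> real"
  assumes X_measurable [measurable]: "X \<in> borel_measurable M"
    and X_nonneg: "\<And>\<omega>. \<omega> \<in> space M \<Longrightarrow> 0 \<le> X \<omega>"
begin

lemma rho_mono: "x \<le> y \<Longrightarrow> rho M X x \<le> rho M X y"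
  unfolding rho_def by (intro finite_measure_mono) auto

lemma rho_nonneg: "0 \<le> rho M X x"
  by (simp add: rho_def)

lemma rho_le_1: "rho M X x \<le> 1"
  by (simp add: rho_def)

lemma rho_eq_0_iff: "rho M X x = 0 \<longleftrightarrow> (AE \<omega> in M. x \<le> X \<omega>)"
  unfolding rho_def by (subst prob_Collect_eq_0) (auto simp: not_less)

lemma rho_eq_1_iff: "rho M X x = 1 \<longleftrightarrow> (AE \<omega> in M. X \<omega> < x)"
  unfolding rho_def by (rule prob_Collect_eq_1) measurable

lemma rho_nonpos: "x \<le> 0 \<Longrightarrow> rho M X x = 0"
  unfolding rho_eq_0_iff using X_nonneg by (auto intro: AE_I2 order_trans)

lemma rho_tendsto_1: "(rho M X \<longlongrightarrow> 1) at_top"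
proof (rule order_tendstoI)
  fix y :: real assume "y < 1"
  have "(\<lambda>n. rho M X (real n))
          \<longlonglongrightarrow> measure M (\<Union>n. {\<omega> \<in> space M. X \<omega> < real n})"
    unfolding rho_def by (intro finite_Lim_measure_incseq) (auto simp: incseq_def)
  moreover have "(\<Union>n. {\<omega> \<in> space M. X \<omega> < real n}) = space M"
    using reals_Archimedean2 by auto
  ultimately have "(\<lambda>n. rho M X (real n)) \<longlonglongrightarrow> 1"
    by (simp add: prob_space)
  from order_tendstoD(1)[OF this \<open>y < 1\<close>] obtain n where "y < rho M X (real n)"
    by (auto simp: eventually_sequentially)
  then show "eventually (\<lambda>c. y < rho M X c) at_top"
    unfolding eventually_at_top_linorder by (auto intro: less_le_trans rho_mono)
next
  fix y :: real assume "1 < y"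
  then show "eventually (\<lambda>c. rho M X c < y) at_top"
    using rho_le_1 by (auto intro!: always_eventually intro: le_less_trans)
qed

lemma
  shows xlow_nonneg: "0 \<le> xlow M X"
    and rho_xlow: "rho M X (xlow M X) = 0"
    and le_xlow: "rho M X c = 0 \<Longrightarrow> c \<le> xlow M X"
proof -
  define T where "T = {x. 0 \<le> x \<and> rho M X x = 0}"
  obtain B where B: "0 < rho M X B"
    using eventually_happens'[OF _ order_tendstoD(1)[OF rho_tendsto_1, of 0]] by auto
  have T_less_B: "x < B" if "x \<in> T" for x
    using that B rho_mono[of B x] unfolding T_def by force
  have "0 \<in> T"
    unfolding T_def by (simp add: rho_nonpos)
  have bdd: "bdd_above T"
    using T_less_B by (auto intro!: bdd_aboveI[of T B] less_imp_le)
  define t where "t = Sup T"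
  have upper: "x \<le> t" if "x \<in> T" for x
    unfolding t_def using that bdd by (rule cSup_upper)
  have "AE \<omega> in M. t \<le> X \<omega>"
  proof (rule AE_ge_if_AE_ge_below)
    fix y assume "y < t"
    then obtain x where "x \<in> T" "y < x"
      unfolding t_def using \<open>0 \<in> T\<close> less_cSupE[of y T] by blast
    then show "AE \<omega> in M. y \<le> X \<omega>"
      unfolding T_def rho_eq_0_iff by (auto elim: eventually_mono)
  qed
  then have t: "0 \<le> t" "rho M X t = 0"
    using upper \<open>0 \<in> T\<close> by (auto simp: rho_eq_0_iff)
  have "xlow M X = t"
    unfolding xlow_def by (rule Greatest_equality) (use t upper T_def in auto)
  then show "0 \<le> xlow M X" "rho M X (xlow M X) = 0"
    using t by simp_all
  show "c \<le> xlow M X" if "rho M X c = 0"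
    using upper[of c] t \<open>xlow M X = t\<close> that by (cases "0 \<le> c") (auto simp: T_def)
qed

lemma AE_xlow_le: "AE \<omega> in M. xlow M X \<le> X \<omega>"
  using rho_xlow by (simp add: rho_eq_0_iff)

lemma rho_pos: "xlow M X < c \<Longrightarrow> 0 < rho M X c"
  using le_xlow[of c] rho_nonneg[of c] by force

lemma xlow_le_xup: "ereal (xlow M X) \<le> xup M X"
  unfolding xup_def
proof (rule Inf_greatest)
  fix z assume "z \<in> ereal ` {x. 0 \<le> x \<and> rho M X x = 1}"
  then obtain x where "z = ereal x" "rho M X x = 1"
    by auto
  moreover have "xlow M X \<le> x"
    using rho_mono[of x "xlow M X"] rho_xlow \<open>rho M X x = 1\<close> by (cases "xlow M X \<le> x") auto
  ultimately show "ereal (xlow M X) \<le> z"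
    by simp
qed

lemma xup_cases:
  obtains "xup M X = \<infinity>" | u where "xup M X = ereal u" "xlow M X \<le> u"
  using xlow_le_xup by (cases "xup M X") auto

lemma rho_less_1: "0 \<le> c \<Longrightarrow> ereal c < xup M X \<Longrightarrow> rho M X c < 1"
  using rho_le_1[of c] Inf_lower[of "ereal c" "ereal ` {x. 0 \<le> x \<and> rho M X x = 1}"]
  unfolding xup_def by force

lemma AE_le_xup:
  assumes "xup M X = ereal u"
  shows "AE \<omega> in M. X \<omega> \<le> u"
proof (rule AE_le_if_AE_le_above)
  fix y assume "u < y"
  then have "Inf (ereal ` {x. 0 \<le> x \<and> rho M X x = 1}) < ereal y"
    using assms unfolding xup_def by simp
  then obtain x where "rho M X x = 1" "x < y"
    by (auto simp: Inf_less_iff)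
  then show "AE \<omega> in M. X \<omega> \<le> y"
    unfolding rho_eq_1_iff by (auto elim: eventually_mono)
qed

lemma integral_indicator_less: "(\<integral>\<omega>. indicator {..<c} (X \<omega>) \<partial>M) = rho M X c"
proof -
  have "(\<integral>\<omega>. indicator {..<c} (X \<omega>) \<partial>M)
        = (\<integral>\<omega>. (indicator {\<omega> \<in> space M. X \<omega> < c} \<omega> :: real) \<partial>M)"
    by (rule Bochner_Integration.integral_cong) (auto simp: indicator_def)
  also have "\<dots> = rho M X c"
    unfolding Bochner_Integration.integral_indicator rho_def by (rule arg_cong[where f="measure M"]) auto
  finally show ?thesis .
qed

lemma integrable_indicator_less: "integrable M (\<lambda>\<omega>. indicator {..<c} (X \<omega>) :: real)"
  by (rule integrable_const_bound[where B=1]) (auto simp: indicator_def)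

lemma integrable_partial:
  fixes B :: real
  assumes "(\<lambda>\<omega>. f (X \<omega>)) \<in> borel_measurable M"
    and "\<And>x. 0 \<le> x \<Longrightarrow> x < c \<Longrightarrow> \<bar>f x\<bar> \<le> B"
  shows "integrable M (\<lambda>\<omega>. f (X \<omega>) * indicator {..<c} (X \<omega>))"
proof (rule integrable_const_bound[where B="max B 0"])
  show "AE \<omega> in M. norm (f (X \<omega>) * indicator {..<c} (X \<omega>)) \<le> max B 0"
  proof (rule AE_I2)
    fix \<omega> assume "\<omega> \<in> space M"
    then show "norm (f (X \<omega>) * indicator {..<c} (X \<omega>)) \<le> max B 0"
      using assms(2)[of "X \<omega>"] X_nonneg[of \<omega>] by (auto simp: indicator_def)
  qed
qed (use assms(1) in measurable)

lemma integrable_partial_id: "integrable M (\<lambda>\<omega>. X \<omega> * indicator {..<c} (X \<omega>))"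
  using integrable_partial[of "\<lambda>x. x" c c] by simp

lemma partial_expectation_const: "partial_expectation M X (\<lambda>_. k) c = k * rho M X c"
  by (simp add: partial_expectation_def integral_indicator_less)

lemma partial_expectation_affine:
  "partial_expectation M X (\<lambda>x. \<alpha> + \<beta> * x) c
     = \<alpha> * rho M X c + \<beta> * partial_expectation M X (\<lambda>x. x) c"
  using integrable_partial_id integrable_indicator_less
  by (simp add: partial_expectation_def distrib_right mult.assoc integral_indicator_less)

lemma partial_expectation_mono:
  assumes "integrable M (\<lambda>\<omega>. f (X \<omega>) * indicator {..<c} (X \<omega>))"
    and "integrable M (\<lambda>\<omega>. g (X \<omega>) * indicator {..<c} (X \<omega>))"
    and "AE \<omega> in M. X \<omega> < c \<longrightarrow> f (X \<omega>) \<le> g (X \<omega>)"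
  shows "partial_expectation M X f c \<le> partial_expectation M X g c"
  unfolding partial_expectation_def
  by (rule integral_mono_AE[OF assms(1,2)]) (use assms(3) in \<open>auto simp: indicator_def elim: eventually_mono\<close>)

lemma xlow_rho_le_partial_mean: "xlow M X * rho M X c \<le> partial_expectation M X (\<lambda>x. x) c"
  unfolding partial_expectation_const[symmetric]
  by (rule partial_expectation_mono)
    (use AE_xlow_le integrable_indicator_less integrable_partial_id in \<open>auto elim: eventually_mono\<close>)

lemma partial_mean_less:
  assumes "xlow M X < c"
  shows "partial_expectation M X (\<lambda>x. x) c < c * rho M X c"
proof -
  let ?f = "\<lambda>\<omega>. (c - X \<omega>) * indicator {..<c} (X \<omega>)"
  have f_int: "integrable M ?f"
    using integrable_partial[of "\<lambda>x. c - x" c c] X_nonneg by simp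
  have f_nonneg: "AE \<omega> in M. 0 \<le> ?f \<omega>"
    by (intro AE_I2) (auto simp: indicator_def)
  have "integral\<^sup>L M ?f = c * rho M X c - partial_expectation M X (\<lambda>x. x) c"
    using partial_expectation_affine[of c "-1" c] by (simp add: partial_expectation_def)
  moreover have "integral\<^sup>L M ?f \<noteq> 0"
  proof
    assume "integral\<^sup>L M ?f = 0"
    then have "AE \<omega> in M. ?f \<omega> = 0"
      using integral_nonneg_eq_0_iff_AE[OF f_int f_nonneg] by simp
    then have "AE \<omega> in M. c \<le> X \<omega>"
      by eventually_elim (auto simp: indicator_def split: if_splits)
    with rho_pos[OF assms] show False
      by (simp add: rho_eq_0_iff[symmetric])
  qed
  moreover have "0 \<le> integral\<^sup>L M ?f"
    using f_nonneg by (rule integral_nonneg_AE)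
  ultimately show ?thesis
    by simp
qed

lemma mean_minus_tail_le_partial_mean:
  assumes "xup M X = ereal u"
  shows "mu M X - (1 - rho M X c) * u \<le> partial_expectation M X (\<lambda>x. x) c"
proof -
  have le_u: "AE \<omega> in M. X \<omega> \<le> u"
    using AE_le_xup[OF assms] .
  have X_int: "integrable M X"
    by (rule integrable_const_bound[where B=u]) (use le_u X_nonneg in \<open>auto elim: eventually_mono\<close>)
  have "mu M X - partial_expectation M X (\<lambda>x. x) c
        = (\<integral>\<omega>. X \<omega> - X \<omega> * indicator {..<c} (X \<omega>) \<partial>M)"
    using X_int integrable_partial_id by (simp add: mu_def partial_expectation_def)
  also have "\<dots> \<le> (\<integral>\<omega>. u - u * indicator {..<c} (X \<omega>) \<partial>M)"
    by (rule integral_mono_AE)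
      (use X_int integrable_partial_id integrable_indicator_less le_u in
        \<open>auto simp: indicator_def elim: eventually_mono\<close>)
  also have "\<dots> = (1 - rho M X c) * u"
    using integrable_indicator_less by (simp add: integral_indicator_less prob_space algebra_simps)
  finally show ?thesis
    by simp
qed

lemma xi_rho_le_partial_mean:
  assumes "xlow M X < c"
  shows "xi M X c * rho M X c \<le> partial_expectation M X (\<lambda>x. x) c"
proof -
  have rho: "0 < rho M X c"
    using rho_pos[OF assms] .
  show ?thesis
  proof (cases rule: xup_cases)
    case 1
    then show ?thesis
      using xlow_rho_le_partial_mean by (simp add: xi_def)
  next
    case (2 u)
    then have "(mu M X - (1 - rho M X c) * u) / rho M X c * rho M X c \<le> partial_expectation M X (\<lambda>x. x) c"
      using mean_minus_tail_le_partial_mean[of u c] rho by simp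
    with 2 show ?thesis
      using xlow_rho_le_partial_mean[of c] by (simp add: xi_def max_def)
  qed
qed

lemma xi_bounds:
  assumes "xlow M X < c"
  shows "xlow M X \<le> xi M X c" "xi M X c < c"
proof -
  show "xlow M X \<le> xi M X c"
    by (simp add: xi_def)
  have "xi M X c * rho M X c < c * rho M X c"
    using xi_rho_le_partial_mean[OF assms] partial_mean_less[OF assms] by simp
  then show "xi M X c < c"
    using rho_pos[OF assms] by simp
qed

text \<open>Jensen's inequality for the law of X conditioned on X < c, via a supergradient of G
  at the conditional mean m.\<close>
lemma partial_expectation_le_concave:
  assumes G: "concave_on {a..c} G" and "a < m" "m < c"
    and mean: "partial_expectation M X (\<lambda>x. x) c = m * rho M X c"
    and AE_ge: "AE \<omega> in M. a \<le> X \<omega>"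
    and f_le: "\<And>x. a \<le> x \<Longrightarrow> x < c \<Longrightarrow> f x \<le> G x"
    and f_int: "integrable M (\<lambda>\<omega>. f (X \<omega>) * indicator {..<c} (X \<omega>))"
  shows "partial_expectation M X f c \<le> rho M X c * G m"
proof -
  obtain s where s: "\<And>y. y \<in> {a..c} \<Longrightarrow> G y \<le> G m + s * (y - m)"
  proof
    have "convex_on {a..c} (\<lambda>x. - G x)"
      using G by (simp add: concave_on_def)
    from convex_le_Inf_differential[OF this]
    show "G y \<le> G m + (- Inf ((\<lambda>t. (- G m - - G t) / (m - t)) ` ({m<..} \<inter> {a..c}))) * (y - m)"
      if "y \<in> {a..c}" for y
      using that \<open>a < m\<close> \<open>m < c\<close> by (simp add: algebra_simps)
  qed
  have "partial_expectation M X f c \<le> partial_expectation M X (\<lambda>x. (G m - s * m) + s * x) c"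
  proof (rule partial_expectation_mono[OF f_int])
    show "integrable M (\<lambda>\<omega>. (G m - s * m + s * X \<omega>) * indicator {..<c} (X \<omega>))"
      using integrable_indicator_less integrable_partial_id by (simp add: distrib_right mult.assoc)
    show "AE \<omega> in M. X \<omega> < c \<longrightarrow> f (X \<omega>) \<le> G m - s * m + s * X \<omega>"
      using AE_ge
    proof eventually_elim
      fix \<omega> assume "a \<le> X \<omega>"
      then show "X \<omega> < c \<longrightarrow> f (X \<omega>) \<le> G m - s * m + s * X \<omega>"
        using f_le[of "X \<omega>"] s[of "X \<omega>"] by (auto simp: algebra_simps)
    qed
  qed
  also have "\<dots> = rho M X c * G m"
    unfolding partial_expectation_affine mean by (simp add: algebra_simps)
  finally show ?thesis .
qed

end

section \<open>The greedy threshold\<close>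

locale reward_model = nonneg_random_variable M X + concave_reward r r'
  for M :: "'a measure" and X :: "'a \<Rightarrow> real" and r r' :: "real \<Rightarrow> real"
begin

lemma deriv_X_measurable [measurable]: "(\<lambda>\<omega>. r' (X \<omega>)) \<in> borel_measurable M"
proof -
  have "continuous_on UNIV (\<lambda>x. r' (max 0 x))"
    by (rule continuous_on_compose2[OF deriv_cont]) (auto intro: continuous_intros)
  then have "(\<lambda>\<omega>. r' (max 0 (X \<omega>))) \<in> borel_measurable M"
    by (rule borel_measurable_continuous_on) measurable
  then show ?thesis
    by (rule measurable_cong[THEN iffD1, rotated]) (use X_nonneg in auto)
qed

lemma integrable_deriv_partial: "integrable M (\<lambda>\<omega>. r' (X \<omega>) * indicator {..<c} (X \<omega>))"
  by (rule integrable_partial[where B="r' 0"]) (use deriv_nonneg deriv_antimono in auto)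

lemma partial_expectation_deriv_0: "partial_expectation M X r' 0 = 0"
proof -
  have "partial_expectation M X r' 0 = (\<integral>\<omega>. 0 \<partial>M)"
    unfolding partial_expectation_def
  proof (rule Bochner_Integration.integral_cong)
    fix \<omega> assume "\<omega> \<in> space M"
    then show "r' (X \<omega>) * indicator {..<0} (X \<omega>) = 0"
      using X_nonneg[of \<omega>] by (simp add: indicator_def)
  qed simp
  then show ?thesis
    by simp
qed

lemma partial_expectation_deriv_tendsto_at_left:
  assumes "0 < c"
  shows "(partial_expectation M X r' \<longlongrightarrow> partial_expectation M X r' c) (at_left c)"
proof (rule tendsto_at_left_sequentially[OF assms])
  fix d :: "nat \<Rightarrow> real"
  assume d: "\<And>n. d n < c" "d \<longlonglongrightarrow> c"
  show "(\<lambda>n. partial_expectation M X r' (d n)) \<longlonglongrightarrow> partial_expectation M X r' c"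
    unfolding partial_expectation_def
  proof (rule integral_dominated_convergence[where w="\<lambda>_. r' 0"])
    show "AE \<omega> in M. norm (r' (X \<omega>) * indicator {..<d n} (X \<omega>)) \<le> r' 0" for n
      using X_nonneg deriv_nonneg deriv_antimono by (intro AE_I2) (auto simp: indicator_def)
    show "AE \<omega> in M. (\<lambda>n. r' (X \<omega>) * indicator {..<d n} (X \<omega>))
                        \<longlonglongrightarrow> r' (X \<omega>) * indicator {..<c} (X \<omega>)"
    proof (rule AE_I2)
      fix \<omega>
      show "(\<lambda>n. r' (X \<omega>) * indicator {..<d n} (X \<omega>))
              \<longlonglongrightarrow> r' (X \<omega>) * indicator {..<c} (X \<omega>)"
      proof (cases "X \<omega> < c")
        case True
        from order_tendstoD(1)[OF d(2) True]
        have "eventually (\<lambda>n. r' (X \<omega>) * indicator {..<d n} (X \<omega>)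
                                 = r' (X \<omega>) * indicator {..<c} (X \<omega>)) sequentially"
          by eventually_elim (use True in \<open>auto simp: indicator_def\<close>)
        then show ?thesis
          by (rule tendsto_eventually)
      next
        case False
        then have "\<not> X \<omega> < d n" for n
          using d(1)[of n] by simp
        with False show ?thesis
          by (simp add: indicator_def)
      qed
    qed
  qed auto
qed

lemma deriv_at_xup_eq_Inf: "xup M X = \<infinity> \<Longrightarrow> deriv_at_xup M X r' = Inf (r' ` {0..})"
  by (simp add: deriv_at_xup_def tendsto_Lim[OF _ deriv_tendsto_Inf])

lemma deriv_at_xup_nonneg: "0 \<le> deriv_at_xup M X r'"
proof (cases rule: xup_cases)
  case 1
  then show ?thesis
    using deriv_nonneg by (auto simp: deriv_at_xup_eq_Inf intro: cInf_greatest)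
next
  case (2 u)
  then show ?thesis
    using xlow_nonneg deriv_nonneg[of u] by (simp add: deriv_at_xup_def)
qed

lemma AE_deriv_at_xup_le: "AE \<omega> in M. deriv_at_xup M X r' \<le> r' (X \<omega>)"
proof (cases rule: xup_cases)
  case 1
  have "Inf (r' ` {0..}) \<le> r' x" if "0 \<le> x" for x
    using that deriv_nonneg by (intro cInf_lower bdd_belowI[where m=0]) auto
  with 1 show ?thesis
    using X_nonneg by (auto simp: deriv_at_xup_eq_Inf intro!: AE_I2)
next
  case (2 u)
  from AE_le_xup[OF 2(1)] AE_space show ?thesis
  proof eventually_elim
    fix \<omega> assume "X \<omega> \<le> u" "\<omega> \<in> space M"
    then show "deriv_at_xup M X r' \<le> r' (X \<omega>)"
      using 2 X_nonneg[of \<omega>] by (simp add: deriv_at_xup_def deriv_antimono)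
  qed
qed

lemma eventually_deriv_less:
  assumes "0 < \<eta>"
  shows "eventually (\<lambda>c. r' c < deriv_at_xup M X r' + \<eta>) at_top"
proof (cases rule: xup_cases)
  case 1
  then show ?thesis
    using order_tendstoD(2)[OF deriv_tendsto_Inf, of "Inf (r' ` {0..}) + \<eta>"] assms
    by (simp add: deriv_at_xup_eq_Inf)
next
  case (2 u)
  have "r' c < r' u + \<eta>" if "u \<le> c" for c
    using that 2 xlow_nonneg deriv_antimono[of u c] assms by simp
  with 2 show ?thesis
    unfolding eventually_at_top_linorder by (auto simp: deriv_at_xup_def)
qed

lemma xlow_less_xup:
  assumes "deriv_at_xup M X r' < r' (xlow M X)"
  shows "ereal (xlow M X) < xup M X"
proof (cases rule: xup_cases)
  case (2 u)
  then have "xlow M X \<noteq> u"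
    using assms by (auto simp: deriv_at_xup_def)
  with 2 show ?thesis
    by simp
qed simp

lemma eventually_deriv_less_partial_expectation:
  assumes "deriv_at_xup M X r' < r' (xlow M X)"
  shows "eventually (\<lambda>c. r' c < partial_expectation M X r' c) at_top"
proof -
  define L where "L = deriv_at_xup M X r'"
  have "eventually (\<lambda>x. xlow M X < x \<and> L < r' x) (at_right (xlow M X))"
    using assms xlow_nonneg unfolding L_def
    by (intro eventually_conj eventually_at_right_less order_tendstoD(1)[OF deriv_tendsto_at_right])
  then obtain c1 where c1: "xlow M X < c1" "L < r' c1"
    using eventually_happens'[OF trivial_limit_at_right_real] by blast
  define \<delta> where "\<delta> = (r' c1 - L) * rho M X c1"
  have "0 < \<delta>"
    using c1 rho_pos[OF c1(1)] by (simp add: \<delta>_def)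
  have lower: "L * rho M X c + \<delta> \<le> partial_expectation M X r' c" if "c1 \<le> c" for c
  proof -
    have "L * rho M X c + \<delta>
          = (\<integral>\<omega>. L * indicator {..<c} (X \<omega>) + (r' c1 - L) * indicator {..<c1} (X \<omega>) \<partial>M)"
      using integrable_indicator_less by (simp add: integral_indicator_less \<delta>_def)
    also have "\<dots> \<le> partial_expectation M X r' c"
      unfolding partial_expectation_def
    proof (rule integral_mono_AE[OF _ integrable_deriv_partial])
      show "integrable M (\<lambda>\<omega>. L * indicator {..<c} (X \<omega>) + (r' c1 - L) * indicator {..<c1} (X \<omega>))"
        using integrable_indicator_less by simp
      from AE_deriv_at_xup_le AE_space
      show "AE \<omega> in M. L * indicator {..<c} (X \<omega>) + (r' c1 - L) * indicator {..<c1} (X \<omega>)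
                         \<le> r' (X \<omega>) * indicator {..<c} (X \<omega>)"
      proof eventually_elim
        fix \<omega> assume "deriv_at_xup M X r' \<le> r' (X \<omega>)" "\<omega> \<in> space M"
        then show "L * indicator {..<c} (X \<omega>) + (r' c1 - L) * indicator {..<c1} (X \<omega>)
                     \<le> r' (X \<omega>) * indicator {..<c} (X \<omega>)"
          using that X_nonneg[of \<omega>] deriv_antimono[of "X \<omega>" c1]
          by (auto simp: L_def indicator_def)
      qed
    qed
    finally show ?thesis .
  qed
  have "((\<lambda>c. L * rho M X c + \<delta>) \<longlongrightarrow> L + \<delta>) at_top"
    using rho_tendsto_1 by (auto intro!: tendsto_eq_intros)
  then have "eventually (\<lambda>c. L + \<delta> / 2 < L * rho M X c + \<delta>) at_top"
    using \<open>0 < \<delta>\<close> by (intro order_tendstoD(1)) auto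
  moreover have "eventually (\<lambda>c. r' c < L + \<delta> / 2) at_top"
    unfolding L_def using \<open>0 < \<delta>\<close> by (intro eventually_deriv_less) simp
  ultimately show ?thesis
    using eventually_ge_at_top[of c1]
    by eventually_elim (use lower in fastforce)
qed

lemma eventually_at_left_deriv_less:
  assumes "0 < s" "r' s < partial_expectation M X r' s"
  shows "eventually (\<lambda>x. r' x < partial_expectation M X r' x) (at_left s)"
proof -
  have "isCont r' s"
    using continuous_on_interior[OF deriv_cont, of s] assms(1) by simp
  then have "((\<lambda>x. partial_expectation M X r' x - r' x)
               \<longlongrightarrow> partial_expectation M X r' s - r' s) (at_left s)"
    using partial_expectation_deriv_tendsto_at_left[OF assms(1)]
    by (intro tendsto_diff) (auto simp: isCont_def intro: tendsto_mono[OF at_le])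
  from order_tendstoD(1)[OF this, of 0] show ?thesis
    using assms(2) by simp
qed

lemma cstar_ge:
  assumes "deriv_at_xup M X r' < r' (xlow M X)"
    and "0 \<le> c" "partial_expectation M X r' c \<le> r' c"
  shows "c \<le> cstar M X r'"
proof -
  define S where "S = {c. 0 \<le> c \<and> partial_expectation M X r' c \<le> r' c}"
  obtain B where B: "\<And>c. B \<le> c \<Longrightarrow> r' c < partial_expectation M X r' c"
    using eventually_deriv_less_partial_expectation[OF assms(1)]
    unfolding eventually_at_top_linorder by blast
  have "x \<le> B" if "x \<in> S" for x
  proof (rule ccontr)
    assume "\<not> x \<le> B"
    with B[of x] that show False
      by (simp add: S_def)
  qed
  then have bdd: "bdd_above S"
    by (rule bdd_aboveI)
  have "0 \<in> S"
    using deriv_nonneg[of 0] by (simp add: S_def partial_expectation_deriv_0)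
  define s where "s = Sup S"
  have upper: "x \<le> s" if "x \<in> S" for x
    unfolding s_def using that bdd by (rule cSup_upper)
  have "s \<in> S"
  proof (rule ccontr)
    assume "s \<notin> S"
    have "0 < s"
      using upper[OF \<open>0 \<in> S\<close>] \<open>0 \<in> S\<close> \<open>s \<notin> S\<close> by (cases "s = 0") auto
    then have "r' s < partial_expectation M X r' s"
      using \<open>s \<notin> S\<close> by (auto simp: S_def)
    with \<open>0 < s\<close> obtain b where "b < s"
      and b: "\<And>y. b < y \<Longrightarrow> y < s \<Longrightarrow> r' y < partial_expectation M X r' y"
      using eventually_at_left_deriv_less by (auto simp: eventually_at_left_field)
    then obtain x where "x \<in> S" "b < x"
      using less_cSupE[of b S] \<open>0 \<in> S\<close> by (auto simp: s_def)
    moreover have "x < s"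
      using upper[OF \<open>x \<in> S\<close>] \<open>x \<in> S\<close> \<open>s \<notin> S\<close> by (cases "x = s") auto
    ultimately show False
      using b[of x] by (simp add: S_def)
  qed
  have "cstar M X r' = s"
    unfolding cstar_def partial_expectation_def[symmetric]
    by (rule Greatest_equality) (use \<open>s \<in> S\<close> upper in \<open>auto simp: S_def\<close>)
  then show ?thesis
    using upper[of c] assms(2,3) by (simp add: S_def)
qed

lemma partial_expectation_deriv_le_majorant:
  assumes "xlow M X < c" "concave_on {xlow M X..c} g"
    and "\<And>y. y \<in> {xlow M X..c} \<Longrightarrow> r' y \<le> g y"
  shows "partial_expectation M X r' c \<le> rho M X c * g (xi M X c)"
proof -
  define a \<rho> \<xi> where "a = xlow M X" and "\<rho> = rho M X c" and "\<xi> = xi M X c"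
  define m where "m = partial_expectation M X (\<lambda>x. x) c / \<rho>"
  define G where "G y = min (g y) (r' a)" for y
  have "0 < \<rho>"
    using rho_pos[OF assms(1)] by (simp add: \<rho>_def)
  then have mean: "partial_expectation M X (\<lambda>x. x) c = m * \<rho>"
    by (simp add: m_def)
  have "a \<le> \<xi>" "\<xi> \<le> m" "m < c"
    using xi_bounds(1)[OF assms(1)] xi_rho_le_partial_mean[OF assms(1)] partial_mean_less[OF assms(1)]
      \<open>0 < \<rho>\<close> by (simp_all add: a_def \<xi>_def \<rho>_def mean)
  have G_concave: "concave_on {a..c} G"
    unfolding G_def a_def by (rule concave_on_min_const[OF assms(2)])
  have G_max: "G y \<le> G a" for y
    using assms(1,3) by (simp add: G_def a_def)
  have r'_le_G: "r' y \<le> G y" if "a \<le> y" "y \<le> c" for y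
    using that assms(3) xlow_nonneg deriv_antimono by (simp add: G_def a_def)
  have "partial_expectation M X r' c \<le> \<rho> * G m"
  proof (cases "a < m")
    case True
    show ?thesis
      unfolding \<rho>_def
      by (rule partial_expectation_le_concave[OF G_concave True \<open>m < c\<close>])
        (use mean r'_le_G AE_xlow_le integrable_deriv_partial in \<open>simp_all add: a_def \<rho>_def\<close>)
  next
    case False
    then have "m = a"
      using \<open>a \<le> \<xi>\<close> \<open>\<xi> \<le> m\<close> by simp
    have "partial_expectation M X r' c \<le> partial_expectation M X (\<lambda>_. r' a) c"
      by (rule partial_expectation_mono[OF integrable_deriv_partial])
        (use integrable_indicator_less AE_xlow_le xlow_nonneg in
          \<open>auto simp: a_def intro: deriv_antimono elim: eventually_mono\<close>)
    also have "\<dots> = \<rho> * G m"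
      using assms(1,3) \<open>m = a\<close> by (simp add: partial_expectation_const G_def \<rho>_def a_def)
    finally show ?thesis .
  qed
  also have "\<dots> \<le> \<rho> * g \<xi>"
  proof -
    have "G m \<le> G \<xi>"
      using concave_on_Icc_antimono[OF G_concave] G_max \<open>a \<le> \<xi>\<close> \<open>\<xi> \<le> m\<close> \<open>m < c\<close> by simp
    then show ?thesis
      using \<open>0 < \<rho>\<close> by (simp add: G_def)
  qed
  finally show ?thesis
    by (simp add: \<rho>_def \<xi>_def)
qed

lemma partial_expectation_deriv_le_env:
  assumes "xlow M X < c"
  shows "partial_expectation M X r' c \<le> rho M X c * concave_env r' (xlow M X) c (xi M X c)"
proof -
  have "0 < rho M X c"
    using rho_pos[OF assms] .
  have "partial_expectation M X r' c / rho M X c \<le> concave_env r' (xlow M X) c (xi M X c)"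
  proof (rule concave_env_greatest)
    show "concave_on {xlow M X..c} (\<lambda>_. r' (xlow M X))"
      by (simp add: concave_on_const)
    show "r' y \<le> r' (xlow M X)" if "y \<in> {xlow M X..c}" for y
      using that xlow_nonneg by (auto intro: deriv_antimono)
    fix g assume "concave_on {xlow M X..c} g" "\<And>y. y \<in> {xlow M X..c} \<Longrightarrow> r' y \<le> g y"
    then show "partial_expectation M X r' c / rho M X c \<le> g (xi M X c)"
      using partial_expectation_deriv_le_majorant[OF assms] \<open>0 < rho M X c\<close>
      by (simp add: divide_le_eq mult.commute)
  qed
  then show ?thesis
    using \<open>0 < rho M X c\<close> by (simp add: divide_le_eq mult.commute)
qed

lemma ex_clow_candidate:
  assumes "deriv_at_xup M X r' < r' (xlow M X)"
  obtains c where "xlow M X < c" "ereal c < xup M X"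
    "rho M X c * concave_env r' (xlow M X) c (xi M X c) \<le> r' c"
proof -
  define a where "a = xlow M X"
  obtain c0 where "ereal a < ereal c0" "ereal c0 < xup M X"
    using ereal_dense2[OF xlow_less_xup[OF assms]] unfolding a_def by blast
  then have c0: "a < c0" "ereal c0 < xup M X"
    by simp_all
  have "0 \<le> a"
    using xlow_nonneg by (simp add: a_def)
  have "0 < r' a"
    using assms deriv_at_xup_nonneg by (simp add: a_def)
  moreover have "rho M X c0 < 1"
    using rho_less_1 c0 \<open>0 \<le> a\<close> by simp
  ultimately have "rho M X c0 * r' a < r' a"
    by simp
  from eventually_at_right_real[OF c0(1)] order_tendstoD(1)[OF deriv_tendsto_at_right[OF \<open>0 \<le> a\<close>] this]
  have "eventually (\<lambda>x. x \<in> {a<..<c0} \<and> rho M X c0 * r' a < r' x) (at_right a)"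
    by (rule eventually_conj)
  then obtain c where c: "a < c" "c < c0" "rho M X c0 * r' a < r' c"
    using eventually_happens'[OF trivial_limit_at_right_real] by auto
  have "rho M X c * concave_env r' a c (xi M X c) \<le> rho M X c * r' a"
  proof (intro mult_left_mono rho_nonneg concave_env_le)
    show "r' y \<le> r' a" if "y \<in> {a..c}" for y
      using that \<open>0 \<le> a\<close> by (auto intro: deriv_antimono)
    show "xi M X c \<in> {a..c}"
      using xi_bounds[of c] c(1) by (simp add: a_def less_imp_le)
  qed (simp add: concave_on_const)
  also have "\<dots> \<le> rho M X c0 * r' a"
    using c(2) \<open>0 < r' a\<close> by (intro mult_right_mono rho_mono) simp_all
  also have "\<dots> < r' c"
    by (rule c(3))
  finally have "rho M X c * concave_env r' a c (xi M X c) \<le> r' c"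
    by simp
  moreover have "ereal c < xup M X"
    using less_trans[of "ereal c" "ereal c0"] c(2) c0(2) by simp
  ultimately show ?thesis
    using that c(1) by (simp add: a_def)
qed

lemma clow_le_cstar:
  assumes "deriv_at_xup M X r' < r' (xlow M X)"
  shows "clow M X r' \<le> cstar M X r'"
  unfolding clow_def
proof (rule cSup_least)
  obtain c where "xlow M X < c" "ereal c < xup M X"
    "rho M X c * concave_env r' (xlow M X) c (xi M X c) \<le> r' c"
    using ex_clow_candidate[OF assms] .
  then show "{c. xlow M X < c \<and> ereal c < xup M X \<and>
      rho M X c * concave_env r' (xlow M X) c (xi M X c) \<le> r' c} \<noteq> {}"
    by blast
  fix c assume "c \<in> {c. xlow M X < c \<and> ereal c < xup M X \<and>
      rho M X c * concave_env r' (xlow M X) c (xi M X c) \<le> r' c}"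
  then show "c \<le> cstar M X r'"
    using xlow_nonneg partial_expectation_deriv_le_env[of c]
    by (intro cstar_ge[OF assms]) auto
qed

lemma clow_log_reward:
  assumes log: "\<forall>x\<ge>0. r x = ln (1 + x) / 2"
  shows "clow M X r' = Sup {c. xlow M X < c \<and> ereal c < xup M X \<and> c \<le> zeta M X c}"
proof -
  define f where "f x = 1 / (2 * (1 + x))" for x :: real
  have threshold_iff:
    "rho M X c * concave_env r' (xlow M X) c (xi M X c) \<le> r' c \<longleftrightarrow> c \<le> zeta M X c"
    if "xlow M X < c" for c
  proof -
    define a where "a = xlow M X"
    have "0 \<le> a" "a < c"
      using xlow_nonneg that by (simp_all add: a_def)
    have r'_eq: "r' y = f y" if "a \<le> y" for y
      using deriv_log_reward[OF log] that \<open>0 \<le> a\<close> by (simp add: f_def)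
    have "concave_env r' a c (xi M X c) = concave_env f a c (xi M X c)"
      using r'_eq by (intro concave_env_cong) simp
    also have "\<dots> = f a + (f c - f a) / (c - a) * (xi M X c - a)"
    proof (rule concave_env_convex)
      show "convex_on {a..c} f"
        unfolding f_def using \<open>0 \<le> a\<close> by (intro convex_on_subset[OF convex_on_half_inverse_succ]) auto
      show "xi M X c \<in> {a..c}"
        using xi_bounds[OF that] by (simp add: a_def less_imp_le)
    qed (rule \<open>a < c\<close>)
    finally show ?thesis
      using log_reward_threshold_iff[OF \<open>0 \<le> a\<close> \<open>a < c\<close> rho_pos[OF that], of "xi M X c"]
        r'_eq[of c] \<open>a < c\<close> by (simp add: f_def zeta_def a_def)
  qed
  show ?thesis
    unfolding clow_def using threshold_iff by (intro arg_cong[where f=Sup]) auto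
qed

end

theorem proposition2:
  fixes M :: "'a measure" and X :: "'a \<Rightarrow> real"
    and r r' :: "real \<Rightarrow> real"
  assumes "prob_space M"
    and "X \<in> borel_measurable M"
    and "\<forall>\<omega>\<in>space M. 0 \<le> X \<omega>"
    and "\<forall>x\<ge>0. 0 \<le> r x"
    and "mono_on {0..} r"
    and "concave_on {0..} r"
    and "\<forall>x\<ge>0. (r has_real_derivative r' x) (at x within {0..})"
    and "continuous_on {0..} r'"
    and "r' (xlow M X) > deriv_at_xup M X r'"
  shows "cstar M X r' \<ge> clow M X r' \<and>
         ((\<forall>x\<ge>0. r x = ln (1 + x) / 2) \<longrightarrow>
            clow M X r' = Sup {c. xlow M X < c \<and> ereal c < xup M X \<and> c \<le> zeta M X c})"
proof -
  interpret reward_model M X r r'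
    using assms(1-3,5-8)
    by (intro reward_model.intro nonneg_random_variable.intro nonneg_random_variable_axioms.intro
        concave_reward.intro) auto
  show ?thesis
    using clow_le_cstar[OF assms(9)] clow_log_reward by blast
qed

end
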